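(* Consider the dynamic composite online convex optimization setting in the context, suppose that the Regularity Assumption, the Lipschitz-likeness Assumption on $\mathbb{B}_h$, and the non-expansiveness Assumption on the maps $\Phi_t$ hold, and that $r_t$ is available so that $\hat{r}_t=r_t$. Run OptDCMD with $\hat r_t=r_t$: starting from some $y_0\in\mathbb{X}$, for $t=1,\dots,T$, $$x_t=\arg\min_{x\in\mathbb{X}}\big\{\eta_t\langle\nabla\hat{s}_t(y_{t-1}),x\rangle+\eta_t r_t(x)+\mathbb{B}_h(x,y_{t-1})\big\},$$ $$\tilde{y}_t=\arg\min_{y\in\mathbb{X}}\big\{\eta_t\langle\nabla s_t(x_t),y\rangle+\eta_t r_t(y)+\mathbb{B}_h(y,y_{t-1})\big\},\qquad y_t=\Phi_t(\tilde{y}_t),$$ with step-size $\eta_1=\eta_2=\frac{1}{2\beta}$ and $\eta_t=\sqrt{\frac{C'_{t-2}+1}{D'_{t-1}+\theta_t}}$ for $t>2$, where the parameters $\theta_t$ are chosen such that $\eta_t\le\eta_{t-1}\le\frac{1}{2\beta}$ and $\theta_t\ge\theta_{t-1}$ for all $t$. Then $$\mathbf{Reg}^d_T\le O\Big(\sqrt{(\theta_T+D'_T)(1+C'_T)}\Big),$$ where $O(\cdot)$ hides constants not depending on $T$.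
   Context: Let $\mathcal{A}$ be a Banach space with norm $\|\cdot\|$ and dual norm $\|\cdot\|_*$. Bregman divergence: $\mathbb{B}_h(x,y)=h(x)-h(y)-\langle\nabla h(y),x-y\rangle$. $f$ is $\beta$-smooth if differentiable with $\|\nabla f(x)-\nabla f(y)\|_*\le\beta\|x-y\|$. At each round $t=1,\dots,T$ the player picks $x_t\in\mathbb{X}$ and incurs $f_t=s_t+r_t$; before choosing $x_t$ it has a gradient prediction $\nabla\hat{s}_t$ of $\nabla s_t$ and dynamical models $\Phi_t:\mathbb{X}\to\mathbb{X}$ of a reference sequence $u_1,\dots,u_{T+1}\in\mathbb{X}$. Regularity Assumption: (i) $\mathbb{X}\subseteq\mathcal{A}$ convex; (ii) $h$ differentiable and 1-strongly convex on $\mathbb{X}$; (iii) each $s_t$ convex and $\beta$-smooth, each $r_t$ convex; (iv) $\mathbb{B}_h(x,y)\le R^2$ for all $x,y\in\mathbb{X}$, some $R>0$; (v) $\|\nabla s_t(x)-\nabla\hat{s}_t(x)\|_*\le\sigma<\infty$ for all $t,x$; (vi) each function prediction $\hat{r}_t$ convex with $|r_t(x)-\hat{r}_t(x)|<\infty$. Lipschitz-likeness Assumption: there is $\gamma>0$ with $\mathbb{B}_h(x,z)-\mathbb{B}_h(y,z)\le\gamma\|x-y\|$ for all $x,y,z\in\mathbb{X}$. Non-expansiveness Assumption: $\mathbb{B}_h(\Phi_t(x),\Phi_t(y))\le\mathbb{B}_h(x,y)$ for all $x,y$, $t$. Define $D'_t=\sum_{\tau=1}^t\|\nabla s_\tau(y_{\tau-1})-\nabla\hat{s}_\tau(y_{\tau-1})\|_*^2$,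 $C'_t=\sum_{\tau=1}^t\|u_{\tau+1}-\Phi_\tau(u_\tau)\|$ (with $C'_0=0$), and dynamic regret $\mathbf{Reg}^d_T=\sum_{t=1}^T f_t(x_t)-\sum_{t=1}^T f_t(u_t)$. *)

theory Defs
  imports "HOL-Analysis.Analysis"
begin

definition strongly_convex_on :: "real \<Rightarrow> 'a::real_normed_vector set \<Rightarrow> ('a \<Rightarrow> real) \<Rightarrow> bool" where
  "strongly_convex_on mu X h \<longleftrightarrow>
     (\<forall>x\<in>X. \<forall>y\<in>X. \<forall>t::real. 0 \<le> t \<and> t \<le> 1 \<longrightarrow>
        h (t *\<^sub>R x + (1 - t) *\<^sub>R y) \<le> t * h x + (1 - t) * h y - (mu / 2) * t * (1 - t) * (norm (x - y))\<^sup>2)"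

text \<open>Bregman divergence; gradients are continuous linear functionals (elements of the dual),
  whose operator norm is the dual norm.\<close>
definition bregman :: "('a::real_normed_vector \<Rightarrow> real) \<Rightarrow> ('a \<Rightarrow> ('a \<Rightarrow>\<^sub>L real)) \<Rightarrow> 'a \<Rightarrow> 'a \<Rightarrow> real" where
  "bregman h dh x y = h x - h y - blinfun_apply (dh y) (x - y)"

definition Dprime :: "(nat \<Rightarrow> 'a \<Rightarrow> ('a::real_normed_vector \<Rightarrow>\<^sub>L real)) \<Rightarrow> (nat \<Rightarrow> 'a \<Rightarrow> ('a \<Rightarrow>\<^sub>L real))
     \<Rightarrow> (nat \<Rightarrow> 'a) \<Rightarrow> nat \<Rightarrow> real" where
  "Dprime ds dsh y t = (\<Sum>\<tau>=1..t. (norm (ds \<tau> (y (\<tau> - 1)) - dsh \<tau> (y (\<tau> - 1))))\<^sup>2)"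

definition Cprime :: "(nat \<Rightarrow> 'a \<Rightarrow> 'a) \<Rightarrow> (nat \<Rightarrow> 'a::real_normed_vector) \<Rightarrow> nat \<Rightarrow> real" where
  "Cprime \<Phi> u t = (\<Sum>\<tau>=1..t. norm (u (Suc \<tau>) - \<Phi> \<tau> (u \<tau>)))"

definition eta :: "real \<Rightarrow> (nat \<Rightarrow> real) \<Rightarrow> (nat \<Rightarrow> real) \<Rightarrow> (nat \<Rightarrow> real) \<Rightarrow> nat \<Rightarrow> real" where
  "eta \<beta> C D \<theta> t = (if t \<le> 2 then 1 / (2 * \<beta>) else sqrt ((C (t - 2) + 1) / (D (t - 1) + \<theta> t)))"

definition dyn_regret :: "(nat \<Rightarrow> 'a \<Rightarrow> real) \<Rightarrow> (nat \<Rightarrow> 'a) \<Rightarrow> (nat \<Rightarrow> 'a) \<Rightarrow> nat \<Rightarrow> real" where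
  "dyn_regret f x u T = (\<Sum>t=1..T. f t (x t)) - (\<Sum>t=1..T. f t (u t))"

end

theory Submission
  imports Defs
begin

text \<open>In round t the three-point inequalities of the two mirror steps, convexity of s_t and
  beta-smoothness (together with eta_t <= 1/(2 beta)) give
  eta_t (f_t(x_t) - f_t(u_t)) <= B(u_t, y_{t-1}) - B(u_t, ytil_t) + eta_t^2 delta_t^2,
  where delta_t is the gradient prediction error at y_{t-1}: the error at x_t is moved there by
  smoothness and absorbed by Bregman terms via Young's inequality. Non-expansiveness of Phi_t and the
  Lipschitz-likeness of B replace B(u_t, ytil_t) by B(u_{t+1}, y_t) - gamma |u_{t+1} - Phi_t(u_t)|.
  Dividing by the non-increasing eta_t and summing, the Bregman terms telescope to R^2/eta_T and the
  dynamics terms add up to at most gamma C'_T/eta_T. For the adaptive step size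
  1/eta_T <= sqrt(theta_T + D'_T), and since every increment of C' is at most 2R,
  C'_T <= (1 + 4R)(C'_{T-2} + 1). Finally eta_t delta_t^2 is bounded by a constant times
  sqrt(1 + C'_T) (sqrt(theta_t + D'_t) - sqrt(theta_{t-1} + D'_{t-1})), which telescopes.\<close>

lemma has_derivative_le_of_chord_le:
  fixes F :: "'a::real_normed_vector \<Rightarrow> real"
  assumes F: "(F has_derivative F') (at x within X)"
    and X: "convex X" "x \<in> X" "z \<in> X"
    and chord: "\<And>l. 0 < l \<Longrightarrow> l \<le> 1 \<Longrightarrow> F (x + l *\<^sub>R (z - x)) - F x \<le> l * (c + l * d)"
  shows "F' (z - x) \<le> c"
proof -
  define p where "p l = x + l *\<^sub>R (z - x)" for l :: real
  have p: "(p has_derivative (\<lambda>l. l *\<^sub>R (z - x))) (at 0 within {0..1})"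
    unfolding p_def by (auto intro!: derivative_eq_intros)
  have "p ` {0..1} \<subseteq> X"
    using X convex_alt[of X] by (auto simp: p_def algebra_simps)
  then have "(F has_derivative F') (at (p 0) within p ` {0..1})"
    using has_derivative_subset[OF F] by (simp add: p_def)
  from diff_chain_within[OF p this]
  have "((F \<circ> p) has_field_derivative F' (z - x)) (at 0 within {0..1})"
    using linear_cmul[OF has_derivative_linear[OF F]]
    by (simp add: has_field_derivative_def o_def mult_commute_abs)
  then have quotient_lim: "((\<lambda>l. (F (p l) - F x) / l) \<longlongrightarrow> F' (z - x)) (at_right 0)"
    by (simp add: has_field_derivative_iff at_within_Icc_at_right p_def)
  have "\<forall>\<^sub>F l in at_right 0. (F (p l) - F x) / l \<le> c + l * d"
    unfolding eventually_at_right_field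
    using chord by (intro exI[of _ 1]) (auto simp: p_def divide_le_eq mult.commute)
  moreover have "((\<lambda>l::real. c + l * d) \<longlongrightarrow> c) (at_right 0)"
    by (auto intro!: tendsto_eq_intros)
  ultimately show ?thesis
    using quotient_lim by (intro tendsto_le[OF _ _ quotient_lim]) auto
qed

lemma convex_on_above_tangent:
  fixes f :: "'a::real_normed_vector \<Rightarrow> real"
  assumes "convex_on X f" "(f has_derivative f') (at x within X)" "x \<in> X" "z \<in> X"
  shows "f x + f' (z - x) \<le> f z"
proof -
  have "f' (z - x) \<le> f z - f x"
  proof (rule has_derivative_le_of_chord_le[where d = 0])
    fix l :: real assume "0 < l" "l \<le> 1"
    then have "f ((1 - l) *\<^sub>R x + l *\<^sub>R z) \<le> (1 - l) * f x + l * f z"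
      using assms by (intro convex_onD) auto
    then show "f (x + l *\<^sub>R (z - x)) - f x \<le> l * (f z - f x + l * 0)"
      by (simp add: algebra_simps)
  qed (use assms convex_on_imp_convex in auto)
  then show ?thesis by simp
qed

lemma bregman_ge_norm_square:
  fixes h :: "'a::real_normed_vector \<Rightarrow> real"
  assumes "convex X" "strongly_convex_on 1 X h"
    "\<And>z. z \<in> X \<Longrightarrow> (h has_derivative blinfun_apply (dh z)) (at z within X)"
    and "x \<in> X" "y \<in> X"
  shows "(norm (x - y))\<^sup>2 / 2 \<le> bregman h dh x y"
proof -
  let ?n = "(norm (x - y))\<^sup>2"
  have "blinfun_apply (dh y) (x - y) \<le> h x - h y - ?n / 2"
  proof (rule has_derivative_le_of_chord_le[where d = "?n / 2"])
    fix l :: real assume "0 < l" "l \<le> 1"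
    then have "h (l *\<^sub>R x + (1 - l) *\<^sub>R y)
        \<le> l * h x + (1 - l) * h y - 1 / 2 * l * (1 - l) * ?n"
      using assms unfolding strongly_convex_on_def by auto
    then show "h (y + l *\<^sub>R (x - y)) - h y \<le> l * (h x - h y - ?n / 2 + l * (?n / 2))"
      by (simp add: algebra_simps diff_divide_distrib add_divide_distrib)
  qed (use assms in auto)
  then show ?thesis unfolding bregman_def by simp
qed

lemma bregman_nonneg:
  fixes h :: "'a::real_normed_vector \<Rightarrow> real"
  assumes "convex X" "strongly_convex_on 1 X h"
    "\<And>z. z \<in> X \<Longrightarrow> (h has_derivative blinfun_apply (dh z)) (at z within X)"
    and "x \<in> X" "y \<in> X"
  shows "0 \<le> bregman h dh x y"
  using bregman_ge_norm_square[OF assms] zero_le_power2[of "norm (x - y)"] by linarith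

lemma norm_le_of_bregman_le:
  fixes h :: "'a::real_normed_vector \<Rightarrow> real"
  assumes "convex X" "strongly_convex_on 1 X h"
    "\<And>z. z \<in> X \<Longrightarrow> (h has_derivative blinfun_apply (dh z)) (at z within X)"
    and "x \<in> X" "y \<in> X" "bregman h dh x y \<le> R\<^sup>2" "0 \<le> R"
  shows "norm (x - y) \<le> 2 * R"
proof (rule power2_le_imp_le)
  have "(2 * R)\<^sup>2 = 4 * R\<^sup>2" by (simp add: power_mult_distrib)
  then show "(norm (x - y))\<^sup>2 \<le> (2 * R)\<^sup>2"
    using bregman_ge_norm_square[OF assms(1-5)] assms(6) zero_le_power2[of R]
    by linarith
qed (use assms in simp)

lemma bregman_three_point_eq:
  "bregman h dh z y = bregman h dh z x + bregman h dh x y + blinfun_apply (dh x - dh y) (z - x)"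
  unfolding bregman_def by (simp add: blinfun.diff_left blinfun.diff_right algebra_simps)

lemma is_arg_min_bregman_first_order:
  fixes h :: "'a::real_normed_vector \<Rightarrow> real"
  assumes X: "convex X" and \<psi>: "convex_on X \<psi>"
    and h: "\<And>z. z \<in> X \<Longrightarrow> (h has_derivative blinfun_apply (dh z)) (at z within X)"
    and xs: "is_arg_min (\<lambda>z. \<psi> z + bregman h dh z y) (\<lambda>z. z \<in> X) xs" and z: "z \<in> X"
  shows "\<psi> xs \<le> \<psi> z + blinfun_apply (dh xs - dh y) (z - xs)"
proof -
  have "xs \<in> X" using xs by (simp add: is_arg_min_def)
  let ?c = "\<psi> z - \<psi> xs - blinfun_apply (dh y) (z - xs)"
  have "- blinfun_apply (dh xs) (z - xs) \<le> ?c"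
  proof (rule has_derivative_le_of_chord_le[where F = "\<lambda>w. - h w" and d = 0])
    show "((\<lambda>w. - h w) has_derivative (\<lambda>w. - blinfun_apply (dh xs) w)) (at xs within X)"
      using h[OF \<open>xs \<in> X\<close>] by (rule has_derivative_minus)
    fix l :: real assume l: "0 < l" "l \<le> 1"
    define p where "p = (1 - l) *\<^sub>R xs + l *\<^sub>R z"
    have p: "p = xs + l *\<^sub>R (z - xs)" by (simp add: p_def algebra_simps)
    have "p \<in> X" using X \<open>xs \<in> X\<close> z l unfolding convex_alt p_def by auto
    then have "\<psi> xs + bregman h dh xs y \<le> \<psi> p + bregman h dh p y"
      using xs unfolding is_arg_min_def by (meson not_le)
    moreover have "\<psi> p \<le> (1 - l) * \<psi> xs + l * \<psi> z"
      using convex_onD[OF \<psi>] \<open>xs \<in> X\<close> z l by (simp add: p_def)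
    moreover have "blinfun_apply (dh y) (p - y)
        = blinfun_apply (dh y) (xs - y) + l * blinfun_apply (dh y) (z - xs)"
      by (simp add: p blinfun.diff_right blinfun.add_right blinfun.scaleR_right algebra_simps)
    ultimately show "- h (xs + l *\<^sub>R (z - xs)) - - h xs \<le> l * (?c + l * 0)"
      unfolding bregman_def p by (simp add: algebra_simps)
  qed (use X \<open>xs \<in> X\<close> z in auto)
  then show ?thesis by (simp add: blinfun.diff_left)
qed

lemma is_arg_min_bregman_three_point:
  fixes h :: "'a::real_normed_vector \<Rightarrow> real"
  assumes "convex X" "convex_on X \<psi>"
    and "\<And>z. z \<in> X \<Longrightarrow> (h has_derivative blinfun_apply (dh z)) (at z within X)"
    and "is_arg_min (\<lambda>z. \<psi> z + bregman h dh z y) (\<lambda>z. z \<in> X) xs" "z \<in> X"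
  shows "\<psi> xs + bregman h dh xs y + bregman h dh z xs \<le> \<psi> z + bregman h dh z y"
  using is_arg_min_bregman_first_order[OF assms] bregman_three_point_eq[of h dh z y xs] by linarith


lemma convex_on_linear:
  assumes "linear f" "convex S"
  shows "convex_on S f"
  using assms by (intro convex_onI) (auto simp: linear_add linear_cmul)

lemma optimistic_young_bound:
  fixes \<eta> \<beta> N a b \<delta> :: real
  assumes "0 \<le> \<eta>" "0 \<le> \<beta>" "\<eta> * \<beta> \<le> 1 / 2" "0 \<le> N" "N \<le> \<beta> * a + \<delta>"
  shows "\<eta> * N * b \<le> b\<^sup>2 / 2 + a\<^sup>2 / 2 + \<eta>\<^sup>2 * \<delta>\<^sup>2"
proof -
  have young: "\<eta> * N * b \<le> b\<^sup>2 / 2 + (\<eta> * N)\<^sup>2 / 2"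
    using sum_squares_ge_zero[of "b - \<eta> * N" 0] by (simp add: power2_eq_square algebra_simps)
  have "(\<eta> * N)\<^sup>2 \<le> (\<eta> * (\<beta> * a + \<delta>))\<^sup>2"
    using assms by (intro power_mono mult_left_mono) auto
  also have "\<dots> \<le> 2 * (\<eta> * \<beta> * a)\<^sup>2 + 2 * (\<eta> * \<delta>)\<^sup>2"
    using sum_squares_ge_zero[of "\<eta> * \<beta> * a - \<eta> * \<delta>" 0] by (simp add: power2_eq_square algebra_simps)
  finally have error: "(\<eta> * N)\<^sup>2 \<le> 2 * (\<eta> * \<beta> * a)\<^sup>2 + 2 * (\<eta> * \<delta>)\<^sup>2" .
  have "(\<eta> * \<beta>)\<^sup>2 \<le> 1 / 4"
    using power_mono[of "\<eta> * \<beta>" "1 / 2" 2] assms by (simp add: power_divide)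
  then have "(\<eta> * \<beta>)\<^sup>2 * a\<^sup>2 \<le> 1 / 4 * a\<^sup>2" by (rule mult_right_mono) simp
  with young error show ?thesis
    unfolding power_mult_distrib using zero_le_power2[of a] by linarith
qed

lemma gradient_gap_le_bregman:
  fixes h :: "'a::real_normed_vector \<Rightarrow> real" and g g' G :: "'a \<Rightarrow>\<^sub>L real"
  assumes X: "convex X" "strongly_convex_on 1 X h"
      "\<And>z. z \<in> X \<Longrightarrow> (h has_derivative blinfun_apply (dh z)) (at z within X)"
    and points: "x \<in> X" "yt \<in> X" "yo \<in> X"
    and g: "norm (g - g') \<le> \<beta> * norm (x - yo)"
    and \<eta>: "0 \<le> \<eta>" "0 \<le> \<beta>" "\<eta> * \<beta> \<le> 1 / 2"
  shows "\<eta> * (g - G) (x - yt) \<le> bregman h dh yt x + bregman h dh x yo + \<eta>\<^sup>2 * (norm (g' - G))\<^sup>2"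
proof -
  have "norm (g - G) \<le> norm (g - g') + norm (g' - G)"
    using norm_triangle_ineq[of "g - g'" "g' - G"] by simp
  then have gap: "norm (g - G) \<le> \<beta> * norm (x - yo) + norm (g' - G)"
    using g by simp
  have "(g - G) (x - yt) \<le> norm (g - G) * norm (x - yt)"
    using norm_blinfun[of "g - G" "x - yt"] by simp
  then have "\<eta> * (g - G) (x - yt) \<le> \<eta> * norm (g - G) * norm (x - yt)"
    using \<eta> by (simp add: mult_left_mono mult.assoc)
  also have "\<dots> \<le> (norm (x - yt))\<^sup>2 / 2 + (norm (x - yo))\<^sup>2 / 2 + \<eta>\<^sup>2 * (norm (g' - G))\<^sup>2"
    using \<eta> gap by (intro optimistic_young_bound) auto
  also have "\<dots> \<le> bregman h dh yt x + bregman h dh x yo + \<eta>\<^sup>2 * (norm (g' - G))\<^sup>2"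
    using bregman_ge_norm_square[OF X points(2,1)] bregman_ge_norm_square[OF X points(1,3)]
    by (simp add: norm_minus_commute)
  finally show ?thesis .
qed

lemma optimistic_mirror_step:
  fixes h s r :: "'a::real_normed_vector \<Rightarrow> real"
  assumes X: "convex X"
    and h: "\<And>z. z \<in> X \<Longrightarrow> (h has_derivative blinfun_apply (dh z)) (at z within X)"
    and h_convex: "strongly_convex_on 1 X h"
    and s: "convex_on X s" "\<And>z. z \<in> X \<Longrightarrow> (s has_derivative blinfun_apply (ds z)) (at z within X)"
    and ds: "\<And>z w. z \<in> X \<Longrightarrow> w \<in> X \<Longrightarrow> norm (ds z - ds w) \<le> \<beta> * norm (z - w)"
    and r: "convex_on X r"
    and \<eta>: "0 < \<eta>" "0 \<le> \<beta>" "\<eta> * \<beta> \<le> 1 / 2"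
    and yo: "yo \<in> X" and u: "u \<in> X"
    and x: "is_arg_min (\<lambda>z. \<eta> * blinfun_apply G z + \<eta> * r z + bregman h dh z yo) (\<lambda>z. z \<in> X) x"
    and yt: "is_arg_min (\<lambda>z. \<eta> * blinfun_apply (ds x) z + \<eta> * r z + bregman h dh z yo) (\<lambda>z. z \<in> X) yt"
  shows "\<eta> * (s x + r x - (s u + r u))
           \<le> bregman h dh u yo - bregman h dh u yt + \<eta>\<^sup>2 * (norm (ds yo - G))\<^sup>2"
proof -
  let ?B = "bregman h dh" and ?g = "ds x"
  have xX: "x \<in> X" and ytX: "yt \<in> X" using x yt by (simp_all add: is_arg_min_def)
  have "convex_on X (blinfun_apply L)" for L
    using X by (intro convex_on_linear bounded_linear.linear blinfun.bounded_linear_right)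
  then have \<psi>: "convex_on X (\<lambda>z. \<eta> * blinfun_apply L z + \<eta> * r z)" for L
    using r \<eta> by (intro convex_on_add convex_on_cmul) auto
  have yt_three_point: "\<eta> * ?g yt + \<eta> * r yt + ?B yt yo + ?B u yt \<le> \<eta> * ?g u + \<eta> * r u + ?B u yo"
    by (rule is_arg_min_bregman_three_point[OF X \<psi> h yt u])
  have x_three_point: "\<eta> * G x + \<eta> * r x + ?B x yo + ?B yt x \<le> \<eta> * G yt + \<eta> * r yt + ?B yt yo"
    by (rule is_arg_min_bregman_three_point[OF X \<psi> h x ytX])
  have "\<eta> * (s x + ?g (u - x)) \<le> \<eta> * s u"
    using convex_on_above_tangent[OF s(1) s(2)[OF xX] xX u] \<eta> by simp
  then have tangent: "\<eta> * s x + \<eta> * ?g u - \<eta> * ?g x \<le> \<eta> * s u"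
    by (simp add: blinfun.diff_right algebra_simps)
  have "\<eta> * (?g - G) (x - yt) \<le> ?B yt x + ?B x yo + \<eta>\<^sup>2 * (norm (ds yo - G))\<^sup>2"
    using \<eta> ds[OF xX yo] by (intro gradient_gap_le_bregman[OF X h_convex h xX ytX yo]) auto
  moreover have "\<eta> * (?g - G) (x - yt) = \<eta> * ?g x - \<eta> * ?g yt - \<eta> * G x + \<eta> * G yt"
    by (simp add: blinfun.diff_left blinfun.diff_right algebra_simps)
  ultimately show ?thesis
    using yt_three_point x_three_point tangent by (simp add: algebra_simps)
qed

lemma sum_divide_telescope_le:
  fixes a \<eta> :: "nat \<Rightarrow> real"
  assumes "1 \<le> n"
    and \<eta>: "\<And>t. t \<in> {1..n} \<Longrightarrow> 0 < \<eta> t" "\<And>t. t \<in> {2..n} \<Longrightarrow> \<eta> t \<le> \<eta> (t - 1)"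
    and a: "\<And>t. t \<in> {1..n} \<Longrightarrow> a t \<le> M" "0 \<le> a (Suc n)"
  shows "(\<Sum>t=1..n. (a t - a (Suc t)) / \<eta> t) \<le> M / \<eta> n"
proof -
  have "(\<Sum>t=1..m. (a t - a (Suc t)) / \<eta> t) \<le> (M - a (Suc m)) / \<eta> m" if "1 \<le> m" "m \<le> n" for m
    using that
  proof (induction m rule: nat_induct_at_least)
    case base
    then show ?case using a(1)[of 1] \<eta>(1)[of 1] by (simp add: divide_right_mono)
  next
    case (Suc m)
    have "(M - a (Suc m)) / \<eta> m \<le> (M - a (Suc m)) / \<eta> (Suc m)"
      using Suc.prems Suc.hyps a(1)[of "Suc m"] \<eta>(1)[of "Suc m"] \<eta>(2)[of "Suc m"]
      by (intro divide_left_mono mult_pos_pos) auto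
    with Suc show ?case by (simp add: diff_divide_distrib)
  qed
  then have "(\<Sum>t=1..n. (a t - a (Suc t)) / \<eta> t) \<le> (M - a (Suc n)) / \<eta> n"
    using \<open>1 \<le> n\<close> by simp
  also have "\<dots> \<le> M / \<eta> n"
    using a(2) \<eta>(1)[of n] \<open>1 \<le> n\<close> by (simp add: divide_right_mono)
  finally show ?thesis .
qed


locale dynamic_mirror_descent =
  fixes \<beta> R \<gamma> :: real
    and X :: "'a::real_normed_vector set" and h :: "'a \<Rightarrow> real" and dh :: "'a \<Rightarrow> 'a \<Rightarrow>\<^sub>L real"
    and s r :: "nat \<Rightarrow> 'a \<Rightarrow> real" and ds dsh :: "nat \<Rightarrow> 'a \<Rightarrow> 'a \<Rightarrow>\<^sub>L real"
    and \<Phi> :: "nat \<Rightarrow> 'a \<Rightarrow> 'a" and u :: "nat \<Rightarrow> 'a" and \<eta> :: "nat \<Rightarrow> real"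
    and x ytil y :: "nat \<Rightarrow> 'a" and T :: nat
  assumes beta_pos: "0 < \<beta>" and gamma_nonneg: "0 \<le> \<gamma>"
    and convex_X: "convex X"
    and h_deriv: "\<And>z. z \<in> X \<Longrightarrow> (h has_derivative blinfun_apply (dh z)) (at z within X)"
    and h_strongly_convex: "strongly_convex_on 1 X h"
    and s_convex: "\<And>t. convex_on X (s t)" and r_convex: "\<And>t. convex_on X (r t)"
    and s_deriv: "\<And>t z. z \<in> X \<Longrightarrow> (s t has_derivative blinfun_apply (ds t z)) (at z within X)"
    and ds_lipschitz: "\<And>t z w. z \<in> X \<Longrightarrow> w \<in> X \<Longrightarrow> norm (ds t z - ds t w) \<le> \<beta> * norm (z - w)"
    and bregman_le: "\<And>z w. z \<in> X \<Longrightarrow> w \<in> X \<Longrightarrow> bregman h dh z w \<le> R\<^sup>2"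
    and bregman_lipschitz_like: "\<And>z w v. z \<in> X \<Longrightarrow> w \<in> X \<Longrightarrow> v \<in> X \<Longrightarrow>
          bregman h dh z v - bregman h dh w v \<le> \<gamma> * norm (z - w)"
    and Phi_in_X: "\<And>t z. z \<in> X \<Longrightarrow> \<Phi> t z \<in> X"
    and Phi_nonexpansive: "\<And>t z w. z \<in> X \<Longrightarrow> w \<in> X \<Longrightarrow>
          bregman h dh (\<Phi> t z) (\<Phi> t w) \<le> bregman h dh z w"
    and u_in_X: "\<And>t. t \<in> {1..Suc T} \<Longrightarrow> u t \<in> X"
    and eta_pos: "\<And>t. 0 < \<eta> t"
    and eta_step: "\<And>t. t \<in> {2..T} \<Longrightarrow> \<eta> t \<le> \<eta> (t - 1) \<and> \<eta> (t - 1) \<le> 1 / (2 * \<beta>)"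
    and eta_one_le: "\<eta> 1 \<le> 1 / (2 * \<beta>)"
    and y0_in_X: "y 0 \<in> X"
    and x_step: "\<And>t. t \<in> {1..T} \<Longrightarrow>
          is_arg_min (\<lambda>z. \<eta> t * blinfun_apply (dsh t (y (t - 1))) z + \<eta> t * r t z + bregman h dh z (y (t - 1)))
            (\<lambda>z. z \<in> X) (x t)"
    and ytil_step: "\<And>t. t \<in> {1..T} \<Longrightarrow>
          is_arg_min (\<lambda>z. \<eta> t * blinfun_apply (ds t (x t)) z + \<eta> t * r t z + bregman h dh z (y (t - 1)))
            (\<lambda>z. z \<in> X) (ytil t)"
    and y_step: "\<And>t. t \<in> {1..T} \<Longrightarrow> y t = \<Phi> t (ytil t)"
begin

abbreviation \<delta> :: "nat \<Rightarrow> real"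
  where "\<delta> t \<equiv> norm (ds t (y (t - 1)) - dsh t (y (t - 1)))"

lemma y_in_X: "t \<le> T \<Longrightarrow> y t \<in> X"
proof (cases t)
  case (Suc n)
  assume "t \<le> T"
  then have "ytil t \<in> X" using ytil_step[of t] Suc by (simp add: is_arg_min_def)
  then show ?thesis using y_step[of t] Phi_in_X \<open>t \<le> T\<close> Suc by simp
qed (simp add: y0_in_X)

lemma eta_le: "t \<in> {1..T} \<Longrightarrow> \<eta> t \<le> 1 / (2 * \<beta>)"
  using eta_one_le eta_step[of t] by (cases "t = 1") auto

lemma eta_antimono:
  assumes "1 \<le> t" "t \<le> t'" "t' \<le> T"
  shows "\<eta> t' \<le> \<eta> t"
  using assms(2,3)
proof (induction t' rule: dec_induct)
  case (step n)
  then show ?case using eta_step[of "Suc n"] assms(1) by simp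
qed simp

lemma round_regret_le:
  assumes t: "t \<in> {1..T}"
  shows "s t (x t) + r t (x t) - (s t (u t) + r t (u t))
    \<le> (bregman h dh (u t) (y (t - 1)) - bregman h dh (u (Suc t)) (y t)
        + \<gamma> * norm (u (Suc t) - \<Phi> t (u t))) / \<eta> t
      + \<eta> t * (\<delta> t)\<^sup>2"
proof -
  let ?B = "bregman h dh"
  have X: "y (t - 1) \<in> X" "u t \<in> X" "u (Suc t) \<in> X" "ytil t \<in> X"
    using t y_in_X[of "t - 1"] u_in_X ytil_step[OF t] by (auto simp: is_arg_min_def)
  have "\<eta> t * \<beta> \<le> 1 / 2" using eta_le[OF t] beta_pos by (simp add: field_simps)
  then have "\<eta> t * (s t (x t) + r t (x t) - (s t (u t) + r t (u t)))
      \<le> ?B (u t) (y (t - 1)) - ?B (u t) (ytil t) + (\<eta> t)\<^sup>2 * (\<delta> t)\<^sup>2"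
    using X beta_pos eta_pos x_step[OF t] ytil_step[OF t]
    by (intro optimistic_mirror_step[OF convex_X h_deriv h_strongly_convex s_convex s_deriv
          ds_lipschitz r_convex]) auto
  moreover have "?B (u (Suc t)) (y t) \<le> ?B (u t) (ytil t) + \<gamma> * norm (u (Suc t) - \<Phi> t (u t))"
    using bregman_lipschitz_like[of "u (Suc t)" "\<Phi> t (u t)" "y t"]
      Phi_nonexpansive[of "u t" "ytil t" t] Phi_in_X X y_step[OF t] by force
  ultimately show ?thesis
    using eta_pos[of t] by (simp add: field_simps power2_eq_square)
qed

lemma regret_le:
  assumes "1 \<le> T"
  shows "dyn_regret (\<lambda>t z. s t z + r t z) x u T
    \<le> (R\<^sup>2 + \<gamma> * Cprime \<Phi> u T) / \<eta> T + (\<Sum>t=1..T. \<eta> t * (\<delta> t)\<^sup>2)"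
proof -
  define B where "B t = bregman h dh (u t) (y (t - 1))" for t
  define c where "c t = norm (u (Suc t) - \<Phi> t (u t))" for t
  have "dyn_regret (\<lambda>t z. s t z + r t z) x u T
      \<le> (\<Sum>t=1..T. (B t - B (Suc t)) / \<eta> t + \<gamma> * c t / \<eta> t + \<eta> t * (\<delta> t)\<^sup>2)"
    unfolding dyn_regret_def sum_subtractf[symmetric] B_def c_def
    using round_regret_le by (intro sum_mono) (simp add: add_divide_distrib)
  moreover have "(\<Sum>t=1..T. (B t - B (Suc t)) / \<eta> t) \<le> R\<^sup>2 / \<eta> T"
    unfolding B_def
    using assms eta_pos eta_step bregman_le u_in_X y_in_X
      bregman_nonneg[OF convex_X h_strongly_convex h_deriv, of "u (Suc T)" "y T"]
    by (intro sum_divide_telescope_le) auto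
  moreover have "(\<Sum>t=1..T. \<gamma> * c t / \<eta> t) \<le> (\<Sum>t=1..T. \<gamma> * c t / \<eta> T)"
    using eta_antimono eta_pos gamma_nonneg
    by (intro sum_mono divide_left_mono mult_nonneg_nonneg mult_pos_pos) (auto simp: c_def)
  moreover have "(\<Sum>t=1..T. \<gamma> * c t / \<eta> T) = \<gamma> * Cprime \<Phi> u T / \<eta> T"
    by (simp add: Cprime_def c_def sum_divide_distrib sum_distrib_left)
  ultimately show ?thesis
    by (simp add: sum.distrib add_divide_distrib)
qed

end


lemma Cprime_nonneg: "0 \<le> Cprime \<Phi> u t"
  by (simp add: Cprime_def sum_nonneg)

lemma Cprime_Suc:
  "Cprime \<Phi> u (Suc t) = Cprime \<Phi> u t + norm (u (Suc (Suc t)) - \<Phi> (Suc t) (u (Suc t)))"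
  by (simp add: Cprime_def)

lemma Cprime_mono: "m \<le> n \<Longrightarrow> Cprime \<Phi> u m \<le> Cprime \<Phi> u n"
  unfolding Cprime_def by (intro sum_mono2) auto

lemma Dprime_nonneg: "0 \<le> Dprime ds dsh y t"
  by (simp add: Dprime_def sum_nonneg)

lemma Dprime_mono: "m \<le> n \<Longrightarrow> Dprime ds dsh y m \<le> Dprime ds dsh y n"
  unfolding Dprime_def by (intro sum_mono2) auto

lemma Dprime_Suc:
  "Dprime ds dsh y (Suc t) = Dprime ds dsh y t + (norm (ds (Suc t) (y t) - dsh (Suc t) (y t)))\<^sup>2"
  by (simp add: Dprime_def)

lemma eta_initial: "t \<le> 2 \<Longrightarrow> eta \<beta> C D \<theta> t = 1 / (2 * \<beta>)"
  by (simp add: eta_def)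

lemma eta_gt_0:
  assumes "0 < \<beta>" "\<And>t. 0 \<le> C t" "\<And>t. 0 \<le> D t" "0 < \<theta> t"
  shows "0 < eta \<beta> C D \<theta> t"
  using assms add_nonneg_pos[OF assms(3,4)] by (simp add: eta_def add_nonneg_pos)

lemma divide_le_sqrt_increment:
  fixes d w S S' k :: real
  assumes "0 < w" "0 \<le> d" "0 \<le> S'" "d \<le> S - S'" "S \<le> k * w\<^sup>2"
  shows "d / w \<le> 2 * sqrt k * (sqrt S - sqrt S')"
proof -
  have "S' \<le> S" "0 \<le> S" using assms by linarith+
  then have "0 \<le> k" using assms zero_le_mult_iff[of k "w\<^sup>2"] by auto
  have "sqrt S \<le> sqrt k * w"
    using real_sqrt_le_mono[OF assms(5)] \<open>0 < w\<close> by (simp add: real_sqrt_mult)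
  have "d \<le> (sqrt S - sqrt S') * (sqrt S + sqrt S')"
    using assms \<open>0 \<le> S\<close> by (simp add: algebra_simps)
  also have "\<dots> \<le> (sqrt S - sqrt S') * (2 * (sqrt k * w))"
    using \<open>sqrt S \<le> sqrt k * w\<close> real_sqrt_le_mono[OF \<open>S' \<le> S\<close>]
    by (intro mult_left_mono) linarith+
  finally show ?thesis
    using \<open>0 < w\<close> by (simp add: pos_divide_le_eq mult.commute mult.left_commute)
qed


locale optdcmd =
  dynamic_mirror_descent \<beta> R \<gamma> X h dh s r ds dsh \<Phi> u "eta \<beta> (Cprime \<Phi> u) (Dprime ds dsh y) \<theta>" x ytil y T
  for \<beta> R \<gamma> X h dh s r ds dsh \<Phi> u \<theta> x ytil y T +
  fixes \<sigma> :: real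
  assumes R_nonneg: "0 \<le> R"
    and theta_pos: "\<And>t. 0 < \<theta> t"
    and theta_step: "\<And>t. t \<in> {2..T} \<Longrightarrow> \<theta> (t - 1) \<le> \<theta> t"
    and prediction_error: "\<And>t z. z \<in> X \<Longrightarrow> norm (ds t z - dsh t z) \<le> \<sigma>"
    and T_ge_3: "3 \<le> T"
begin

abbreviation "C \<equiv> Cprime \<Phi> u"
abbreviation "D \<equiv> Dprime ds dsh y"
abbreviation "\<eta> \<equiv> eta \<beta> C D \<theta>"

lemma eta_eq: "2 < t \<Longrightarrow> \<eta> t = sqrt (C (t - 2) + 1) / sqrt (D (t - 1) + \<theta> t)"
  by (simp add: eta_def real_sqrt_divide)

lemma D_theta_pos: "0 < D m + \<theta> t"
  using add_nonneg_pos[OF Dprime_nonneg theta_pos] .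

lemma sqrt_D_theta_ge:
  assumes "t \<in> {3..T}"
  shows "2 * \<beta> * sqrt (C (t - 2) + 1) \<le> sqrt (D (t - 1) + \<theta> t)"
proof -
  have "sqrt (C (t - 2) + 1) = \<eta> t * sqrt (D (t - 1) + \<theta> t)"
    using eta_eq[of t] D_theta_pos[of "t - 1" t] assms by simp
  moreover have "2 * \<beta> * \<eta> t \<le> 1"
    using eta_le[of t] assms beta_pos by (simp add: field_simps)
  ultimately show ?thesis
    using mult_right_mono[of "2 * \<beta> * \<eta> t" 1 "sqrt (D (t - 1) + \<theta> t)"]
      D_theta_pos[of "t - 1" t]
    by (simp add: mult.assoc)
qed

lemma inverse_eta_le: "1 / \<eta> T \<le> sqrt (\<theta> T + D T)"
proof -
  have "1 / \<eta> T = sqrt (D (T - 1) + \<theta> T) / sqrt (C (T - 2) + 1)"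
    using eta_eq[of T] T_ge_3 by simp
  also have "\<dots> \<le> sqrt (D (T - 1) + \<theta> T)"
    using Cprime_nonneg[of \<Phi> u "T - 2"] D_theta_pos[of "T - 1" T]
    by (intro divide_left_mono[where b = 1, simplified]) auto
  also have "\<dots> \<le> sqrt (\<theta> T + D T)"
    using Dprime_mono[of "T - 1" T] by (simp add: add.commute)
  finally show ?thesis .
qed

lemma path_increment_le: "t \<in> {1..T} \<Longrightarrow> norm (u (Suc t) - \<Phi> t (u t)) \<le> 2 * R"
  by (rule norm_le_of_bregman_le[OF convex_X h_strongly_convex h_deriv])
    (use u_in_X Phi_in_X bregman_le R_nonneg in auto)

lemma path_length_over_eta_le: "C T / \<eta> T \<le> (1 + 4 * R) * sqrt (1 + C T) * sqrt (\<theta> T + D T)"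
proof -
  define m where "m = T - 2"
  have T: "T = Suc (Suc m)" using T_ge_3 unfolding m_def by arith
  define q where "q = sqrt (C m + 1)"
  define w where "w = sqrt (D (T - 1) + \<theta> T)"
  have "C T \<le> C m + 4 * R"
    using path_increment_le[of "Suc m"] path_increment_le[of "Suc (Suc m)"]
    by (simp add: T Cprime_Suc)
  also have "\<dots> \<le> (1 + 4 * R) * q\<^sup>2"
    using Cprime_nonneg[of \<Phi> u m] R_nonneg by (simp add: q_def algebra_simps)
  finally have "C T / q \<le> (1 + 4 * R) * q"
    using Cprime_nonneg[of \<Phi> u m] by (simp add: q_def divide_le_eq power2_eq_square algebra_simps)
  also have "\<dots> \<le> (1 + 4 * R) * sqrt (1 + C T)"
    using Cprime_mono[of m T \<Phi> u] R_nonneg by (intro mult_left_mono) (auto simp: q_def T add.commute)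
  finally have "C T / q * w \<le> (1 + 4 * R) * sqrt (1 + C T) * w"
    using D_theta_pos[of "T - 1" T] by (intro mult_right_mono) (auto simp: w_def)
  also have "\<dots> \<le> (1 + 4 * R) * sqrt (1 + C T) * sqrt (\<theta> T + D T)"
    using Dprime_mono[of "T - 1" T] R_nonneg Cprime_nonneg[of \<Phi> u T]
    by (intro mult_left_mono) (auto simp: w_def add.commute)
  finally show ?thesis
    using eta_eq[of T] T_ge_3 by (simp add: q_def w_def m_def)
qed

lemma gradient_error_le: "t \<in> {1..T} \<Longrightarrow> (\<delta> t)\<^sup>2 \<le> \<sigma>\<^sup>2"
  using prediction_error[OF y_in_X[of "t - 1"]] by (intro power_mono) auto

lemma gradient_error_term_le:
  assumes t: "t \<in> {3..T}"
  shows "\<eta> t * (\<delta> t)\<^sup>2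
    \<le> 2 * sqrt (1 + \<sigma>\<^sup>2 / (4 * \<beta>\<^sup>2)) * sqrt (1 + C T)
      * (sqrt (\<theta> t + D t) - sqrt (\<theta> (t - 1) + D (t - 1)))"
proof -
  define k where "k = 1 + \<sigma>\<^sup>2 / (4 * \<beta>\<^sup>2)"
  define w where "w = sqrt (D (t - 1) + \<theta> t)"
  have w: "0 < w" "w\<^sup>2 = D (t - 1) + \<theta> t"
    using D_theta_pos[of "t - 1" t] by (simp_all add: w_def)
  have D_t: "D t = D (t - 1) + (\<delta> t)\<^sup>2" using Dprime_Suc[of ds dsh y "t - 1"] t by simp
  have "2 * \<beta> \<le> 2 * \<beta> * sqrt (C (t - 2) + 1)"
    using beta_pos Cprime_nonneg[of \<Phi> u "t - 2"] by simp
  then have "2 * \<beta> \<le> w"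
    using sqrt_D_theta_ge[OF t] by (simp add: w_def)
  then have "4 * \<beta>\<^sup>2 \<le> w\<^sup>2"
    using power_mono[of "2 * \<beta>" w 2] beta_pos by (simp add: power_mult_distrib)
  then have "\<sigma>\<^sup>2 / (4 * \<beta>\<^sup>2) * (4 * \<beta>\<^sup>2) \<le> \<sigma>\<^sup>2 / (4 * \<beta>\<^sup>2) * w\<^sup>2"
    by (intro mult_left_mono) auto
  then have "\<sigma>\<^sup>2 \<le> \<sigma>\<^sup>2 / (4 * \<beta>\<^sup>2) * w\<^sup>2"
    using beta_pos by simp
  then have "\<theta> t + D t \<le> k * w\<^sup>2"
    using gradient_error_le[of t] t D_t w by (simp add: k_def algebra_simps)
  moreover have "\<theta> (t - 1) \<le> \<theta> t" using theta_step[of t] t by simp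
  ultimately have quotient:
      "(\<delta> t)\<^sup>2 / w \<le> 2 * sqrt k * (sqrt (\<theta> t + D t) - sqrt (\<theta> (t - 1) + D (t - 1)))"
    using w D_t D_theta_pos[of "t - 1" "t - 1"]
    by (intro divide_le_sqrt_increment) (auto simp: add.commute)
  have "\<eta> t * (\<delta> t)\<^sup>2 = sqrt (C (t - 2) + 1) * ((\<delta> t)\<^sup>2 / w)"
    using eta_eq[of t] t by (simp add: w_def)
  also have "\<dots>
      \<le> sqrt (1 + C T) * (2 * sqrt k * (sqrt (\<theta> t + D t) - sqrt (\<theta> (t - 1) + D (t - 1))))"
    using quotient w Cprime_mono[of "t - 2" T \<Phi> u] Cprime_nonneg[of \<Phi> u T] t
    by (intro mult_mono) (auto simp: add.commute)
  finally show ?thesis by (simp add: k_def mult_ac)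
qed


lemma gradient_error_sum_le:
  "(\<Sum>t=1..T. \<eta> t * (\<delta> t)\<^sup>2)
    \<le> \<sigma>\<^sup>2 / \<beta> + 2 * sqrt (1 + \<sigma>\<^sup>2 / (4 * \<beta>\<^sup>2)) * sqrt (1 + C T) * sqrt (\<theta> T + D T)"
proof -
  define K where "K = 2 * sqrt (1 + \<sigma>\<^sup>2 / (4 * \<beta>\<^sup>2)) * sqrt (1 + C T)"
  define F where "F t = sqrt (\<theta> t + D t)" for t
  define a where "a t = \<eta> t * (\<delta> t)\<^sup>2" for t
  have "(\<Sum>t=1..T. a t) = a 1 + a 2 + (\<Sum>t=3..T. a t)"
    using T_ge_3 by (simp add: sum.atLeast_Suc_atMost numeral_3_eq_3 numeral_2_eq_2)
  also have "a 1 + a 2 \<le> \<sigma>\<^sup>2 / \<beta>"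
  proof -
    have "a t \<le> \<sigma>\<^sup>2 / (2 * \<beta>)" if "t \<in> {1..2}" for t
      using gradient_error_le[of t] T_ge_3 beta_pos that
      by (simp add: a_def eta_initial divide_right_mono)
    from this[of 1] this[of 2] show ?thesis by simp
  qed
  also have "(\<Sum>t=3..T. a t) \<le> (\<Sum>t=3..T. K * (F t - F (t - 1)))"
    using gradient_error_term_le by (intro sum_mono) (simp add: a_def K_def F_def)
  also have "\<dots> = K * (F T - F 2)"
    using T_ge_3 sum_telescope''[of 2 T F]
    by (simp add: sum_distrib_left[symmetric] numeral_3_eq_3)
  also have "\<dots> \<le> K * F T"
    using D_theta_pos[of 2 2] Cprime_nonneg[of \<Phi> u T]
    by (intro mult_left_mono) (auto simp: K_def F_def add.commute)
  finally show ?thesis by (simp add: a_def K_def F_def)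
qed

theorem regret_bound:
  "dyn_regret (\<lambda>t z. s t z + r t z) x u T
    \<le> (R\<^sup>2 + \<gamma> * (1 + 4 * R) + \<sigma>\<^sup>2 / (2 * \<beta>\<^sup>2) + 2 * sqrt (1 + \<sigma>\<^sup>2 / (4 * \<beta>\<^sup>2)))
       * sqrt ((\<theta> T + D T) * (1 + C T))"
proof -
  define S where "S = sqrt (\<theta> T + D T)"
  define P where "P = sqrt (1 + C T)"
  have P: "1 \<le> P" using Cprime_nonneg[of \<Phi> u T] by (simp add: P_def)
  have inverse_eta: "1 / \<eta> T \<le> S" using inverse_eta_le by (simp add: S_def)
  have "2 * \<beta> \<le> 1 / \<eta> T"
    using eta_le[of T] eta_pos[of T] beta_pos T_ge_3 by (simp add: field_simps)
  then have S: "2 * \<beta> \<le> S" using inverse_eta by linarith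
  have "R\<^sup>2 / \<eta> T \<le> R\<^sup>2 * S"
    using mult_left_mono[OF inverse_eta, of "R\<^sup>2"] by simp
  also have "\<dots> \<le> R\<^sup>2 * S * P"
    using mult_left_mono[OF P, of "R\<^sup>2 * S"] S beta_pos by simp
  finally have divergence: "R\<^sup>2 / \<eta> T \<le> R\<^sup>2 * S * P" .
  have path: "\<gamma> * C T / \<eta> T \<le> \<gamma> * (1 + 4 * R) * S * P"
    using mult_left_mono[OF path_length_over_eta_le gamma_nonneg]
    by (simp add: S_def P_def mult_ac)
  have "\<sigma>\<^sup>2 / \<beta> = \<sigma>\<^sup>2 / (2 * \<beta>\<^sup>2) * (2 * \<beta>)"
    using beta_pos by (simp add: power2_eq_square)
  also have "\<dots> \<le> \<sigma>\<^sup>2 / (2 * \<beta>\<^sup>2) * S"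
    using S by (intro mult_left_mono) auto
  also have "\<dots> \<le> \<sigma>\<^sup>2 / (2 * \<beta>\<^sup>2) * S * P"
    using mult_left_mono[OF P, of "\<sigma>\<^sup>2 / (2 * \<beta>\<^sup>2) * S"] S beta_pos by simp
  finally have prediction: "\<sigma>\<^sup>2 / \<beta> \<le> \<sigma>\<^sup>2 / (2 * \<beta>\<^sup>2) * S * P" .
  have "dyn_regret (\<lambda>t z. s t z + r t z) x u T
      \<le> R\<^sup>2 / \<eta> T + \<gamma> * C T / \<eta> T + (\<Sum>t=1..T. \<eta> t * (\<delta> t)\<^sup>2)"
    using regret_le T_ge_3 by (simp add: add_divide_distrib)
  also have "\<dots>
      \<le> (R\<^sup>2 + \<gamma> * (1 + 4 * R) + \<sigma>\<^sup>2 / (2 * \<beta>\<^sup>2) + 2 * sqrt (1 + \<sigma>\<^sup>2 / (4 * \<beta>\<^sup>2))) * (S * P)"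
    using divergence path prediction gradient_error_sum_le
    by (simp add: S_def P_def algebra_simps)
  finally show ?thesis
    by (simp add: S_def P_def real_sqrt_mult)
qed

end


theorem theorem5:
  fixes \<beta> R \<gamma> \<sigma> :: real
  assumes "\<beta> > 0" and "R > 0" and "\<gamma> > 0"
  shows "\<exists>K::real. \<forall>(X::'a::banach set) (h::'a \<Rightarrow> real) dh
            (s::nat \<Rightarrow> 'a \<Rightarrow> real) ds dsh (r::nat \<Rightarrow> 'a \<Rightarrow> real)
            (\<Phi>::nat \<Rightarrow> 'a \<Rightarrow> 'a) (u::nat \<Rightarrow> 'a) (\<theta>::nat \<Rightarrow> real)
            (x::nat \<Rightarrow> 'a) (ytil::nat \<Rightarrow> 'a) (y::nat \<Rightarrow> 'a) (T::nat).
     (convex X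
      \<and> (\<forall>z\<in>X. (h has_derivative blinfun_apply (dh z)) (at z within X))
      \<and> strongly_convex_on 1 X h
      \<and> (\<forall>t. convex_on X (s t) \<and> convex_on X (r t))
      \<and> (\<forall>t. \<forall>z\<in>X. (s t has_derivative blinfun_apply (ds t z)) (at z within X))
      \<and> (\<forall>t. \<forall>z\<in>X. \<forall>w\<in>X. norm (ds t z - ds t w) \<le> \<beta> * norm (z - w))
      \<and> (\<forall>z\<in>X. \<forall>w\<in>X. bregman h dh z w \<le> R\<^sup>2)
      \<and> (\<forall>t. \<forall>z\<in>X. norm (ds t z - dsh t z) \<le> \<sigma>)
      \<and> (\<forall>z\<in>X. \<forall>w\<in>X. \<forall>v\<in>X. bregman h dh z v - bregman h dh w v \<le> \<gamma> * norm (z - w))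
      \<and> (\<forall>t. \<forall>z\<in>X. \<Phi> t z \<in> X)
      \<and> (\<forall>t. \<forall>z\<in>X. \<forall>w\<in>X. bregman h dh (\<Phi> t z) (\<Phi> t w) \<le> bregman h dh z w)
      \<and> (\<forall>t\<in>{1..Suc T}. u t \<in> X)
      \<and> (\<forall>t. \<theta> t > 0)
      \<and> (\<forall>t\<in>{2..T}. eta \<beta> (Cprime \<Phi> u) (Dprime ds dsh y) \<theta> t
                        \<le> eta \<beta> (Cprime \<Phi> u) (Dprime ds dsh y) \<theta> (t - 1)
                    \<and> eta \<beta> (Cprime \<Phi> u) (Dprime ds dsh y) \<theta> (t - 1) \<le> 1 / (2 * \<beta>)
                    \<and> \<theta> (t - 1) \<le> \<theta> t)
      \<and> y 0 \<in> X
      \<and> (\<forall>t\<in>{1..T}.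
           is_arg_min (\<lambda>z. eta \<beta> (Cprime \<Phi> u) (Dprime ds dsh y) \<theta> t * blinfun_apply (dsh t (y (t - 1))) z
                          + eta \<beta> (Cprime \<Phi> u) (Dprime ds dsh y) \<theta> t * r t z + bregman h dh z (y (t - 1)))
                      (\<lambda>z. z \<in> X) (x t)
         \<and> is_arg_min (\<lambda>z. eta \<beta> (Cprime \<Phi> u) (Dprime ds dsh y) \<theta> t * blinfun_apply (ds t (x t)) z
                          + eta \<beta> (Cprime \<Phi> u) (Dprime ds dsh y) \<theta> t * r t z + bregman h dh z (y (t - 1)))
                      (\<lambda>z. z \<in> X) (ytil t)
         \<and> y t = \<Phi> t (ytil t))
      \<and> T \<ge> 3)
     \<longrightarrow> dyn_regret (\<lambda>t z. s t z + r t z) x u T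
           \<le> K * sqrt ((\<theta> T + Dprime ds dsh y T) * (1 + Cprime \<Phi> u T))"
  by (intro exI[of _ "R\<^sup>2 + \<gamma> * (1 + 4 * R) + \<sigma>\<^sup>2 / (2 * \<beta>\<^sup>2) + 2 * sqrt (1 + \<sigma>\<^sup>2 / (4 * \<beta>\<^sup>2))"]
        allI impI,
      elim conjE, rule optdcmd.regret_bound, unfold_locales)
    (use assms in \<open>auto intro: eta_gt_0 Cprime_nonneg Dprime_nonneg simp: eta_initial\<close>)

end
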